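(* Let $\phi(r)=r^{-12}-2r^{-6}$ (Lennard-Jones), $\eta=\phi'$, $\hat\eta(r)=\eta(r)+2\eta(2r)$, let $\tilde r_2$ be the unique point with $\eta''<0$ on $(0,\tilde r_2)$ and $\eta''>0$ on $(\tilde r_2,\infty)$, and let $a_1$ be the unique point with $\hat\eta'>0$ on $(0,a_1)$ and $\hat\eta'<0$ on $(a_1,\infty)$. Let $N,K$ be positive integers with $K<N-1$. For $\mathbf r=(r_{-N},\dots,r_N)\in(0,\infty)^{2N+1}$ define $F^{QCF}_j(\mathbf r)$, $j=-N,\dots,N+1$, by $F^{QCF}_{-N}(\mathbf r)=\eta(r_{-N})+2\eta(2r_{-N})$; $F^{QCF}_j(\mathbf r)=[\eta(r_j)+2\eta(2r_j)]-[\eta(r_{j-1})+2\eta(2r_{j-1})]$ for $-N+1\le j\le -K$ and for $K+1\le j\le N$; $F^{QCF}_j(\mathbf r)=[\eta(r_j)+\eta(r_j+r_{j+1})]-[\eta(r_{j-1})+\eta(r_{j-1}+r_{j-2})]$ for $-K+1\le j\le K$; $F^{QCF}_{N+1}(\mathbf r)=-[\eta(r_N)+2\eta(2r_N)]$. Let $f_{-N},\dots,f_{N+1}\in\mathbb R$ be anti-symmetric, i.e. $f_{j+1}=-f_{-j}$ for $j=0,\dots,N$, and set $\Phi_j=-\sum_{i=-N}^{j}f_i$ for $j=-N,\dots,N$. For any $r_U$ with $\tilde r_2/2<r_U<a_1$, let $r_L=\max\left(\frac{\tilde r_2}{2},\left(\frac{63}{16\,\eta'(r_U)}\right)^{1/8}\right)$.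 If $r_L<r_U$, then the equilibrium equations $F^{QCF}_j(\mathbf r)+f_j=0$, $j=-N,\dots,N+1$, have a unique symmetric solution $\mathbf r$ in $\Omega=(r_L,r_U)^{2N+1}$ whenever $\eta(r_L)+4\eta(2r_L)-2\eta(2r_U)<\Phi_j<\eta(r_U)+4\eta(2r_U)-2\eta(2r_L)$ for $j=-N,\dots,N$.
   Context: $F^{QCF}_j$ is the force-based quasicontinuum force on the $j$-th representative atom of a one-dimensional chain in terms of the lattice spacings $r_j$; $f_j$ are external forces. A vector $\mathbf r$ is symmetric if $r_{-j}=r_j$ for $j=1,\dots,N$. *)

theory Defs
  imports "HOL-Analysis.Analysis"
begin

definition phi :: "real \<Rightarrow> real" where
  "phi r = r powi (-12) - 2 * r powi (-6)"

definition eta :: "real \<Rightarrow> real" where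
  "eta r = deriv phi r"

definition eta_hat :: "real \<Rightarrow> real" where
  "eta_hat r = eta r + 2 * eta (2 * r)"

definition r2t :: real where
  "r2t = (THE t. 0 < t \<and> (\<forall>x. 0 < x \<and> x < t \<longrightarrow> deriv (deriv eta) x < 0)
                       \<and> (\<forall>x. t < x \<longrightarrow> deriv (deriv eta) x > 0))"

definition a1 :: real where
  "a1 = (THE t. 0 < t \<and> (\<forall>x. 0 < x \<and> x < t \<longrightarrow> deriv eta_hat x > 0)
                      \<and> (\<forall>x. t < x \<longrightarrow> deriv eta_hat x < 0))"

text \<open>Force-based QC force on atom j (j = -N..N+1), lattice spacings r j (j = -N..N).\<close>
definition FQCF :: "int \<Rightarrow> int \<Rightarrow> (int \<Rightarrow> real) \<Rightarrow> int \<Rightarrow> real" where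
  "FQCF N K r j =
     (if j = -N then eta (r (-N)) + 2 * eta (2 * r (-N))
      else if j = N + 1 then - (eta (r N) + 2 * eta (2 * r N))
      else if (-N + 1 \<le> j \<and> j \<le> -K) \<or> (K + 1 \<le> j \<and> j \<le> N) then
        (eta (r j) + 2 * eta (2 * r j)) - (eta (r (j - 1)) + 2 * eta (2 * r (j - 1)))
      else
        (eta (r j) + eta (r j + r (j + 1))) - (eta (r (j - 1)) + eta (r (j - 1) + r (j - 2))))"

definition symmetric_vec :: "int \<Rightarrow> (int \<Rightarrow> real) \<Rightarrow> bool" where
  "symmetric_vec N r \<longleftrightarrow> (\<forall>j. 1 \<le> j \<and> j \<le> N \<longrightarrow> r (-j) = r j)"

definition Phi :: "int \<Rightarrow> (int \<Rightarrow> real) \<Rightarrow> int \<Rightarrow> real" where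
  "Phi N f j = - (\<Sum>i = -N..j. f i)"

definition r_lower :: "real \<Rightarrow> real" where
  "r_lower rU = max (r2t / 2) ((63 / (16 * deriv eta rU)) powr (1/8))"

end

theory Submission
  imports Defs
begin

(*
  For a symmetric chain the equilibrium equations telescope: with residuals rho_j
  (0 <= j <= N) one has F_j + f_j = rho_j - rho_(j-1) for 1 <= j <= N,
  F_(N+1) + f_(N+1) = - rho_N (antisymmetry of f gives Phi_N = f_(N+1)), and the equation
  at j <= 0 mirrors the one at 1 - j. So equilibrium means rho_j = 0 for all j.
  In the continuum region this says eta_hat (r_j) = Phi_j, which has a unique solution in
  (rL, rU) because eta_hat is increasing there. In the atomistic region it says
  eta (r_j) = A_j (r), where r enters A_j only through second-neighbour terms
  eta (r_i + r_(i+1)) with bond lengths >= 2 rL >= r2t. There eta is Lipschitz with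
  constant kappa = 84 / (2 rL)^8, whereas eta' >= eta' (rU) on [rL, rU]. The choice of
  r_lower makes eta' (rU) >= 12 kappa, so r |-> eta^-1 (A (r)) is a contraction with
  constant 5 kappa / eta' (rU) <= 5/12 on the atomistic spacings, and Banach's fixed point
  theorem yields existence and uniqueness.
*)

lemma THE_sign_change_point:
  fixes P Q :: "real \<Rightarrow> bool"
  assumes "0 < t0" and below: "\<And>x. 0 < x \<Longrightarrow> x < t0 \<Longrightarrow> P x"
    and above: "\<And>x. t0 < x \<Longrightarrow> Q x" and excl: "\<And>x. P x \<Longrightarrow> Q x \<Longrightarrow> False"
  shows "(THE t. 0 < t \<and> (\<forall>x. 0 < x \<and> x < t \<longrightarrow> P x) \<and> (\<forall>x. t < x \<longrightarrow> Q x)) = t0"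
proof (rule the_equality)
  show "0 < t0 \<and> (\<forall>x. 0 < x \<and> x < t0 \<longrightarrow> P x) \<and> (\<forall>x. t0 < x \<longrightarrow> Q x)"
    using assms by blast
next
  fix t assume t: "0 < t \<and> (\<forall>x. 0 < x \<and> x < t \<longrightarrow> P x) \<and> (\<forall>x. t < x \<longrightarrow> Q x)"
  show "t = t0"
  proof (rule ccontr)
    assume "t \<noteq> t0"
    define x where "x = (t + t0) / 2"
    from \<open>t \<noteq> t0\<close> consider "t < x" "x < t0" | "t0 < x" "x < t"
      unfolding x_def by (cases t t0 rule: linorder_cases) auto
    then show False
    proof cases
      case 1
      then show False using t below[of x] excl[of x] by auto
    next
      case 2
      then show False using t \<open>0 < t0\<close> above[of x] excl[of x] by auto
    qed
  qed
qed

lemma power_strict_mono_iff: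
  fixes x y :: real
  shows "0 \<le> x \<Longrightarrow> 0 \<le> y \<Longrightarrow> 0 < n \<Longrightarrow> x ^ n < y ^ n \<longleftrightarrow> x < y"
  by (meson not_le power_mono_iff)

lemma IVT_inv_into:
  fixes f :: "real \<Rightarrow> real"
  assumes "a \<le> b" "continuous_on {a..b} f" "f a < u" "u < f b"
  shows "inv_into {a..b} f u \<in> {a<..<b}" "f (inv_into {a..b} f u) = u"
proof -
  obtain x where "x \<in> {a..b}" "f x = u"
    using IVT'[of f a u b] assms by force
  then have u: "u \<in> f ` {a..b}"
    by blast
  show "f (inv_into {a..b} f u) = u"
    using u by (rule f_inv_into_f)
  moreover have "inv_into {a..b} f u \<in> {a..b}"
    using u by (rule inv_into_into)
  ultimately show "inv_into {a..b} f u \<in> {a<..<b}"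
    using assms by (cases "inv_into {a..b} f u = a \<or> inv_into {a..b} f u = b") auto
qed

lemma (in Metric_space) fspace_finite: "finite I \<Longrightarrow> fspace I = I \<rightarrow>\<^sub>E M"
proof -
  assume "finite I"
  have "mbounded X" if "finite X" "X \<subseteq> M" for X
    using that by (induction X rule: finite_induct) (auto simp: mbounded_insert)
  then show ?thesis
    using \<open>finite I\<close> by (auto simp: fspace_def PiE_iff image_subset_iff extensional_def)
qed

lemma (in Metric_space) fdist_finite:
  "finite I \<Longrightarrow> I \<noteq> {} \<Longrightarrow> f \<in> I \<rightarrow>\<^sub>E M \<Longrightarrow> g \<in> I \<rightarrow>\<^sub>E M \<Longrightarrow>
    fdist I f g = (MAX i\<in>I. d (f i) (g i))"
  by (simp add: fdist_def fspace_finite cSup_eq_Max)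

lemma contraction_PiE_unique_fixpoint:
  fixes T :: "('i \<Rightarrow> 'a::complete_space) \<Rightarrow> 'i \<Rightarrow> 'a"
  assumes I: "finite I" "I \<noteq> {}" and S: "closed S" "S \<noteq> {}"
    and maps: "T \<in> (I \<rightarrow>\<^sub>E S) \<rightarrow> (I \<rightarrow>\<^sub>E S)" and "q < 1"
    and contr: "\<And>x y i. x \<in> I \<rightarrow>\<^sub>E S \<Longrightarrow> y \<in> I \<rightarrow>\<^sub>E S \<Longrightarrow> i \<in> I \<Longrightarrow>
                  dist (T x i) (T y i) \<le> q * (MAX j\<in>I. dist (x j) (y j))"
  shows "\<exists>!x. x \<in> I \<rightarrow>\<^sub>E S \<and> T x = x"
proof -
  interpret S: Metric_space S dist
    by (rule Met_TC.subspace) simp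
  have "S.mcomplete"
    using Submetric.closedin_mcomplete_imp_mcomplete[of UNIV dist S] S complete_UNIV
    by (simp add: Submetric_def Submetric_axioms_def Met_TC.Metric_space_axioms)
  interpret F: Metric_space "S.fspace I" "S.fdist I"
    by (rule S.Metric_space_funspace)
  have "F.mcomplete"
    using S.mcomplete_funspace[OF \<open>S.mcomplete\<close>, of I]
    by (simp add: mcomplete_of_def funspace_def)
  have fspace: "S.fspace I = I \<rightarrow>\<^sub>E S"
    using I(1) by (rule S.fspace_finite)
  have contr': "S.fdist I (T x) (T y) \<le> q * S.fdist I x y"
    if "x \<in> I \<rightarrow>\<^sub>E S" "y \<in> I \<rightarrow>\<^sub>E S" for x y
  proof -
    have "T x \<in> I \<rightarrow>\<^sub>E S" "T y \<in> I \<rightarrow>\<^sub>E S"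
      using funcset_mem[OF maps that(1)] funcset_mem[OF maps that(2)] .
    then show ?thesis
      using that I contr by (simp add: S.fdist_finite)
  qed
  have "I \<rightarrow>\<^sub>E S \<noteq> {}"
    using S(2) by (simp add: PiE_eq_empty_iff)
  then obtain x where x: "x \<in> I \<rightarrow>\<^sub>E S" "T x = x"
    by (rule F.Banach_fixedpoint_thm[OF \<open>F.mcomplete\<close>, unfolded fspace, OF _ maps \<open>q < 1\<close> contr'])
  have unique: "y = x" if "y \<in> I \<rightarrow>\<^sub>E S" "T y = y" for y
    by (rule F.contraction_imp_unique_fixpoint[unfolded fspace, OF that(2) x(2) maps \<open>q < 1\<close> contr' that(1) x(1)])
  show ?thesis
  proof (rule ex1I[of _ x])
    show "x \<in> I \<rightarrow>\<^sub>E S \<and> T x = x"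
      using x by (rule conjI)
  next
    fix y assume y: "y \<in> I \<rightarrow>\<^sub>E S \<and> T y = y"
    show "y = x"
      using unique[OF conjunct1[OF y] conjunct2[OF y]] .
  qed
qed

section \<open>The Lennard-Jones force\<close>

lemma eta_formula: "x \<noteq> 0 \<Longrightarrow> eta x = 12 / x^7 - 12 / x^13"
proof -
  assume "x \<noteq> 0"
  have "phi = (\<lambda>r. 1 / r^12 - 2 / r^6)"
    by (rule ext) (simp add: phi_def power_int_minus divide_inverse)
  moreover have "((\<lambda>r. 1 / r^12 - 2 / r^6) has_real_derivative 12 / x^7 - 12 / x^13) (at x)"
    using \<open>x \<noteq> 0\<close> by (auto intro!: derivative_eq_intros simp: field_simps)
  ultimately have "(phi has_real_derivative 12 / x^7 - 12 / x^13) (at x)"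
    by simp
  then show ?thesis
    unfolding eta_def by (rule DERIV_imp_deriv)
qed

lemma eta_has_derivative: "x \<noteq> 0 \<Longrightarrow> (eta has_real_derivative 156 / x^14 - 84 / x^8) (at x)"
  by (rule has_field_derivative_transform_within_open[of "\<lambda>x. 12 / x^7 - 12 / x^13" _ _ "-{0}"])
     (auto intro!: derivative_eq_intros simp: eta_formula field_simps)

lemma deriv_eta_formula: "x \<noteq> 0 \<Longrightarrow> deriv eta x = 156 / x^14 - 84 / x^8"
  using eta_has_derivative by (rule DERIV_imp_deriv)

lemma DERIV_eta: "x \<noteq> 0 \<Longrightarrow> (eta has_real_derivative deriv eta x) (at x)"
  by (simp add: deriv_eta_formula eta_has_derivative)

lemma deriv_eta_has_derivative:
  "x \<noteq> 0 \<Longrightarrow> (deriv eta has_real_derivative 672 / x^9 - 2184 / x^15) (at x)"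
  by (rule has_field_derivative_transform_within_open[of "\<lambda>x. 156 / x^14 - 84 / x^8" _ _ "-{0}"])
     (auto intro!: derivative_eq_intros simp: deriv_eta_formula field_simps)

lemma eta_hat_has_derivative:
  "x \<noteq> 0 \<Longrightarrow> (eta_hat has_real_derivative deriv eta x + 4 * deriv eta (2 * x)) (at x)"
  unfolding eta_hat_def[abs_def]
  by (auto intro!: derivative_eq_intros DERIV_chain2[OF eta_has_derivative] simp: deriv_eta_formula)

lemma deriv_eta: "0 < x \<Longrightarrow> deriv eta x = 84 * (13/7 - x^6) / x^14"
  by (simp add: deriv_eta_formula field_simps)

lemma deriv2_eta: "0 < x \<Longrightarrow> deriv (deriv eta) x = 672 * (x^6 - 13/4) / x^15"
  by (simp add: DERIV_imp_deriv[OF deriv_eta_has_derivative] field_simps)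

lemma deriv_eta_hat: "0 < x \<Longrightarrow> deriv eta_hat x = 1365/16 * (4097/2240 - x^6) / x^14"
proof -
  assume "0 < x"
  have "deriv eta_hat x = deriv eta x + 4 * deriv eta (2 * x)"
    using \<open>0 < x\<close> by (simp add: DERIV_imp_deriv[OF eta_hat_has_derivative])
  also have "\<dots> = (84 * (13/7 - x^6) + 84 * (13/7 - 64 * x^6) / 4096) / x^14"
    using \<open>0 < x\<close> by (simp add: deriv_eta power_mult_distrib add_divide_distrib divide_simps)
  also have "\<dots> = 1365/16 * (4097/2240 - x^6) / x^14"
    using \<open>0 < x\<close> by (simp add: field_simps)
  finally show ?thesis .
qed

lemma r2t_eq: "r2t = root 6 (13/4)"
  unfolding r2t_def
proof (rule THE_sign_change_point)
  let ?t = "root 6 (13/4) :: real"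
  have t6: "?t ^ 6 = 13/4" by simp
  show t_pos: "0 < ?t" by simp
  show "deriv (deriv eta) x < 0" if "0 < x" "x < ?t" for x
    using that power_strict_mono_iff[of x ?t 6] by (simp add: deriv2_eta t6 divide_neg_pos)
  show "deriv (deriv eta) x > 0" if "?t < x" for x
  proof -
    have "0 < x" using that t_pos by linarith
    then show ?thesis
      using that power_strict_mono_iff[of ?t x 6] by (simp add: deriv2_eta t6)
  qed
qed auto

lemma a1_eq: "a1 = root 6 (4097/2240)"
  unfolding a1_def
proof (rule THE_sign_change_point)
  let ?t = "root 6 (4097/2240) :: real"
  have t6: "?t ^ 6 = 4097/2240" by simp
  show t_pos: "0 < ?t" by simp
  show "deriv eta_hat x > 0" if "0 < x" "x < ?t" for x
    using that power_strict_mono_iff[of x ?t 6] by (simp add: deriv_eta_hat t6)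
  show "deriv eta_hat x < 0" if "?t < x" for x
  proof -
    have "0 < x" using that t_pos by linarith
    then show ?thesis
      using that power_strict_mono_iff[of ?t x 6] by (simp add: deriv_eta_hat t6 divide_neg_pos)
  qed
qed auto

lemma r2t_pos: "0 < r2t"
  by (simp add: r2t_eq)

lemma r2t_pow6: "r2t ^ 6 = 13/4"
  by (simp add: r2t_eq)

lemma a1_less_r2t: "a1 < r2t"
  by (simp add: a1_eq r2t_eq)

lemma deriv_eta_pos_below_a1:
  assumes "0 < x" "x < a1"
  shows "0 < deriv eta x"
proof -
  have "x ^ 6 < a1 ^ 6"
    using assms power_strict_mono_iff[of x a1 6] by simp
  then have "x ^ 6 < 13/7"
    by (simp add: a1_eq)
  then show ?thesis
    using assms(1) by (simp add: deriv_eta)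
qed

lemma deriv_eta_antimono:
  assumes "0 < x" "x \<le> y" "y \<le> r2t"
  shows "deriv eta y \<le> deriv eta x"
proof (rule DERIV_nonpos_imp_nonincreasing[OF \<open>x \<le> y\<close>])
  fix z assume z: "x \<le> z" "z \<le> y"
  then have "0 < z" "z ^ 6 \<le> r2t ^ 6"
    using assms by (auto intro: power_mono)
  then have "deriv (deriv eta) z \<le> 0"
    by (simp add: deriv2_eta r2t_pow6 divide_nonpos_pos)
  then show "\<exists>D. (deriv eta has_real_derivative D) (at z) \<and> D \<le> 0"
    using deriv_eta_has_derivative[of z] DERIV_imp_deriv \<open>0 < z\<close> by fastforce
qed

lemma eta_mvt:
  assumes "0 < a" "a < b"
  obtains z where "a < z" "z < b" "eta b - eta a = (b - a) * deriv eta z"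
  using MVT2[OF \<open>a < b\<close>, of eta "deriv eta"] DERIV_eta assms by force

lemma eta_diff_lower:
  assumes "0 < a" "a \<le> b" "b \<le> c" "c \<le> r2t"
  shows "deriv eta c * (b - a) \<le> eta b - eta a"
proof (cases "a = b")
  case False
  then obtain z where z: "a < z" "z < b" "eta b - eta a = (b - a) * deriv eta z"
    using eta_mvt assms by (metis order_le_less)
  have "deriv eta c \<le> deriv eta z"
    using z assms by (intro deriv_eta_antimono) auto
  then show ?thesis
    using z assms by (simp add: mult.commute mult_right_mono)
qed simp

lemma eta_diff_upper:
  assumes "0 < c" "c \<le> a" "a \<le> b"
  shows "eta a - eta b \<le> 84 / c^8 * (b - a)"
proof (cases "a = b")
  case False
  then obtain z where z: "a < z" "z < b" "eta b - eta a = (b - a) * deriv eta z"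
    using eta_mvt assms by (metis order_le_less order_less_le_trans)
  have "84 / z^8 \<le> 84 / c^8"
    using z assms by (intro divide_left_mono power_mono mult_pos_pos) auto
  moreover have "- deriv eta z \<le> 84 / z^8"
    using z assms by (simp add: deriv_eta_formula)
  ultimately have "- deriv eta z \<le> 84 / c^8"
    by linarith
  have "eta a - eta b = (b - a) * (- deriv eta z)"
    using z by simp
  also have "\<dots> \<le> (b - a) * (84 / c^8)"
    using \<open>- deriv eta z \<le> 84 / c^8\<close> z by (intro mult_left_mono) auto
  finally show ?thesis
    by (simp add: mult.commute)
qed simp

lemma eta_antimono:
  assumes "r2t \<le> a" "a \<le> b"
  shows "eta b \<le> eta a"
proof (rule DERIV_nonpos_imp_nonincreasing[OF \<open>a \<le> b\<close>])
  fix z assume z: "a \<le> z" "z \<le> b"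
  have "0 < z"
    using z assms r2t_pos by linarith
  have "13/4 \<le> z ^ 6"
    using power_mono[of r2t z 6] z assms r2t_pos by (simp add: r2t_pow6)
  then have "deriv eta z \<le> 0"
    using \<open>0 < z\<close> by (simp add: deriv_eta divide_nonpos_pos)
  then show "\<exists>D. (eta has_real_derivative D) (at z) \<and> D \<le> 0"
    using DERIV_eta[of z] \<open>0 < z\<close> by auto
qed

lemma eta_lipschitz_beyond:
  assumes "r2t \<le> c" "c \<le> s" "c \<le> t"
  shows "\<bar>eta s - eta t\<bar> \<le> 84 / c^8 * \<bar>s - t\<bar>"
proof (cases "s \<le> t")
  case True
  then show ?thesis
    using assms r2t_pos eta_antimono[of s t] eta_diff_upper[of c s t] by simp
next
  case False
  then show ?thesis
    using assms r2t_pos eta_antimono[of t s] eta_diff_upper[of c t s] by simp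
qed

lemma continuous_on_eta: "0 \<notin> S \<Longrightarrow> continuous_on S eta"
  by (metis DERIV_isCont continuous_at_imp_continuous_on eta_has_derivative)

lemma continuous_on_eta_hat: "0 \<notin> S \<Longrightarrow> continuous_on S eta_hat"
  by (metis DERIV_isCont continuous_at_imp_continuous_on eta_hat_has_derivative)

section \<open>Symmetric equilibria and residuals\<close>

lemma symmetric_vecD:
  assumes "symmetric_vec N r" "\<bar>i\<bar> \<le> N"
  shows "r (- i) = r i"
  using assms unfolding symmetric_vec_def
  by (cases i "0::int" rule: linorder_cases) (auto dest: spec[of _ "- i"] spec[of _ i])

lemma Phi_pred: "- N < j \<Longrightarrow> Phi N f (j - 1) = Phi N f j + f j"
proof -
  assume "- N < j"
  then have "{-N..j} = insert j {-N..j - 1}"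
    by auto
  then show ?thesis
    unfolding Phi_def by simp
qed

lemma sum_antisymmetric:
  fixes f :: "int \<Rightarrow> 'a::ab_group_add"
  assumes "\<forall>j. 0 \<le> j \<and> j \<le> N \<longrightarrow> f (j + 1) = - f (- j)"
  shows "(\<Sum>i = -N..N + 1. f i) = 0"
proof -
  have split: "{-N..N + 1} = uminus ` {0..N} \<union> (\<lambda>j. j + 1) ` {0..N}"
    by auto
  have "(\<Sum>i = -N..N + 1. f i) = sum f (uminus ` {0..N}) + sum f ((\<lambda>j. j + 1) ` {0..N})"
    unfolding split by (rule sum.union_disjoint) auto
  also have "\<dots> = (\<Sum>j = 0..N. f (- j)) + (\<Sum>j = 0..N. f (j + 1))"
    by (subst (1 2) sum.reindex) (auto simp: inj_on_def)
  also have "\<dots> = 0"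
    using assms by (simp add: sum_negf)
  finally show ?thesis .
qed

lemma Phi_last:
  assumes "0 \<le> N" "\<forall>j. 0 \<le> j \<and> j \<le> N \<longrightarrow> f (j + 1) = - f (- j)"
  shows "Phi N f N = f (N + 1)"
  using Phi_pred[of N "N + 1" f] sum_antisymmetric[OF assms(2)] assms(1)
  by (simp add: Phi_def)

locale qcf_forces =
  fixes N K :: int and f :: "int \<Rightarrow> real"
  assumes K_pos: "0 < K" and K_less: "K < N - 1"
    and f_antisym: "\<forall>j. 0 \<le> j \<and> j \<le> N \<longrightarrow> f (j + 1) = - f (- j)"
begin

lemma FQCF_left: "FQCF N K r (- N) = eta_hat (r (- N))"
  using K_pos K_less by (simp add: FQCF_def eta_hat_def)

lemma FQCF_right: "FQCF N K r (N + 1) = - eta_hat (r N)"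
  using K_pos K_less by (simp add: FQCF_def eta_hat_def)

lemma FQCF_continuum:
  "- N < j \<and> j \<le> - K \<or> K < j \<and> j \<le> N \<Longrightarrow> FQCF N K r j = eta_hat (r j) - eta_hat (r (j - 1))"
  using K_pos K_less by (auto simp: FQCF_def eta_hat_def)

lemma FQCF_atomistic:
  "- K < j \<Longrightarrow> j \<le> K \<Longrightarrow>
    FQCF N K r j = (eta (r j) + eta (r j + r (j + 1))) - (eta (r (j - 1)) + eta (r (j - 1) + r (j - 2)))"
  using K_pos K_less by (auto simp: FQCF_def)

definition atom_sum :: "(int \<Rightarrow> real) \<Rightarrow> int \<Rightarrow> real" where
  "atom_sum r j = eta (r j) + eta (r (j - 1) + r j) + eta (r j + r (j + 1))"

definition interface_term :: "(int \<Rightarrow> real) \<Rightarrow> real" where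
  "interface_term r = eta (r (K - 1) + r K) + eta (r K + r (K + 1)) - 2 * eta (2 * r K)"

definition residual :: "(int \<Rightarrow> real) \<Rightarrow> int \<Rightarrow> real" where
  "residual r j = (if j < K then atom_sum r j - interface_term r else eta_hat (r j)) - Phi N f j"

lemma residual_upto_K: "j \<le> K \<Longrightarrow> residual r j = atom_sum r j - interface_term r - Phi N f j"
  by (cases "j = K") (auto simp: residual_def atom_sum_def interface_term_def eta_hat_def)

lemma FQCF_residual_step:
  assumes "0 < j" "j \<le> N"
  shows "FQCF N K r j + f j = residual r j - residual r (j - 1)"
proof -
  have f_j: "f j = Phi N f (j - 1) - Phi N f j"
    using Phi_pred[of N j f] assms by simp
  show ?thesis
  proof (cases "j \<le> K")
    case True
    then show ?thesis
      using assms f_j K_pos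
      by (simp add: FQCF_atomistic residual_upto_K atom_sum_def algebra_simps)
  next
    case False
    then show ?thesis
      using assms f_j by (simp add: FQCF_continuum residual_def)
  qed
qed

lemma FQCF_residual_last: "FQCF N K r (N + 1) + f (N + 1) = - residual r N"
  using K_pos K_less Phi_last[OF _ f_antisym] by (simp add: FQCF_right residual_def)

lemma FQCF_mirror:
  assumes "symmetric_vec N r" "- N \<le> j" "j \<le> 0"
  shows "FQCF N K r j + f j = - (FQCF N K r (1 - j) + f (1 - j))"
proof -
  have r_sym: "r (- i) = r i" if "\<bar>i\<bar> \<le> N" for i
    using symmetric_vecD[OF assms(1) that] .
  have "f (1 - j) = - f j"
    using f_antisym[rule_format, of "- j"] assms by simp
  moreover consider "j = - N" | "- N < j" "j \<le> - K" | "- K < j"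
    using assms(2) by linarith
  then have "FQCF N K r j = - FQCF N K r (1 - j)"
  proof cases
    case 1
    then have "1 - j = N + 1"
      by simp
    then show ?thesis
      using 1 r_sym[of N] K_pos K_less by (simp only: FQCF_left FQCF_right)
  next
    case 2
    then show ?thesis
      using r_sym[of j] r_sym[of "j - 1"] assms K_pos by (simp add: FQCF_continuum)
  next
    case 3
    then show ?thesis
      using r_sym[of j] r_sym[of "j - 1"] r_sym[of "j + 1"] r_sym[of "j - 2"] assms K_pos K_less
      by (simp add: FQCF_atomistic algebra_simps)
  qed
  ultimately show ?thesis
    by simp
qed

lemma equilibrium_iff_residual_zero:
  assumes "symmetric_vec N r"
  shows "(\<forall>j. - N \<le> j \<and> j \<le> N + 1 \<longrightarrow> FQCF N K r j + f j = 0)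
     \<longleftrightarrow> (\<forall>j. 0 \<le> j \<and> j \<le> N \<longrightarrow> residual r j = 0)"
proof
  assume eq: "\<forall>j. - N \<le> j \<and> j \<le> N + 1 \<longrightarrow> FQCF N K r j + f j = 0"
  show "\<forall>j. 0 \<le> j \<and> j \<le> N \<longrightarrow> residual r j = 0"
  proof (intro allI impI)
    fix j assume j: "0 \<le> j \<and> j \<le> N"
    then have "j \<le> N" by simp
    then have "0 \<le> j \<longrightarrow> residual r j = 0"
    proof (induction j rule: int_le_induct)
      case base
      show ?case
        using eq[rule_format, of "N + 1"] FQCF_residual_last[of r] K_pos K_less by simp
    next
      case (step i)
      show ?case
      proof
        assume "0 \<le> i - 1"
        then show "residual r (i - 1) = 0"
          using step eq FQCF_residual_step[of i r] by force
      qed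
    qed
    with j show "residual r j = 0"
      by simp
  qed
next
  assume res: "\<forall>j. 0 \<le> j \<and> j \<le> N \<longrightarrow> residual r j = 0"
  have right: "FQCF N K r j + f j = 0" if "0 < j" "j \<le> N + 1" for j
    using that res FQCF_residual_step[of j r] FQCF_residual_last K_less
    by (cases "j = N + 1") auto
  show "\<forall>j. - N \<le> j \<and> j \<le> N + 1 \<longrightarrow> FQCF N K r j + f j = 0"
  proof (intro allI impI)
    fix j assume j: "- N \<le> j \<and> j \<le> N + 1"
    show "FQCF N K r j + f j = 0"
    proof (cases "0 < j")
      case True
      then show ?thesis
        using right j by simp
    next
      case False
      then have "FQCF N K r (1 - j) + f (1 - j) = 0"
        using right[of "1 - j"] j by simp
      then show ?thesis
        using FQCF_mirror[OF assms, of j] j False by simp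
    qed
  qed
qed

end

section \<open>Existence and uniqueness by contraction\<close>

text \<open>The corollary is the instance \<open>rL = r_lower rU\<close>; the argument needs only the slope
  gap \<open>5 \<kappa> < \<eta>'(rU)\<close>, where \<kappa> is the Lipschitz constant of \<eta> on \<open>[2 rL, \<infinity>)\<close>.\<close>

locale qcf_chain = qcf_forces +
  fixes rL rU :: real
  assumes rL_pos: "0 < rL" and rL_less_rU: "rL < rU"
    and rU_le_r2t: "rU \<le> r2t" and r2t_le_2rL: "r2t \<le> 2 * rL"
    and slope_gap: "5 * (84 / (2 * rL)^8) < deriv eta rU"
    and Phi_bounds: "\<forall>j. - N \<le> j \<and> j \<le> N \<longrightarrow>
           eta rL + 4 * eta (2 * rL) - 2 * eta (2 * rU) < Phi N f j \<and>
           Phi N f j < eta rU + 4 * eta (2 * rU) - 2 * eta (2 * rL)"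
begin

definition \<kappa> :: real where
  "\<kappa> = 84 / (2 * rL)^8"

lemma \<kappa>_pos: "0 < \<kappa>"
  using rL_pos by (simp add: \<kappa>_def)

lemma \<kappa>_gap: "5 * \<kappa> < deriv eta rU"
  using slope_gap by (simp add: \<kappa>_def)

lemma eta_slope_bound:
  "rL \<le> x \<Longrightarrow> x \<le> y \<Longrightarrow> y \<le> rU \<Longrightarrow> deriv eta rU * (y - x) \<le> eta y - eta x"
  using eta_diff_lower[of x y rU] rL_pos rU_le_r2t by simp

lemma eta_expansive:
  assumes "x \<in> {rL..rU}" "y \<in> {rL..rU}"
  shows "deriv eta rU * \<bar>x - y\<bar> \<le> \<bar>eta x - eta y\<bar>"
  using assms eta_slope_bound[of x y] eta_slope_bound[of y x] \<kappa>_pos \<kappa>_gap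
  by (cases "x \<le> y") (auto simp: abs_if)

lemma eta_bond_bounds: "s \<in> {2 * rL..2 * rU} \<Longrightarrow> eta (2 * rU) \<le> eta s \<and> eta s \<le> eta (2 * rL)"
  using eta_antimono[of s "2 * rU"] eta_antimono[of "2 * rL" s] r2t_le_2rL by auto

lemma eta_bond_lipschitz: "2 * rL \<le> s \<Longrightarrow> 2 * rL \<le> t \<Longrightarrow> \<bar>eta s - eta t\<bar> \<le> \<kappa> * \<bar>s - t\<bar>"
  unfolding \<kappa>_def using eta_lipschitz_beyond r2t_le_2rL by blast

lemma eta_strict_mono_on: "strict_mono_on {rL..rU} eta"
proof (rule strict_mono_onI)
  fix x y assume "x \<in> {rL..rU}" "y \<in> {rL..rU}" "x < y"
  moreover have "0 < deriv eta rU * (y - x)"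
    using \<kappa>_pos \<kappa>_gap \<open>x < y\<close> by simp
  ultimately show "eta x < eta y"
    using eta_slope_bound[of x y] by simp
qed

lemma eta_hat_strict_mono_on: "strict_mono_on {rL..rU} eta_hat"
proof (rule strict_mono_onI)
  fix x y assume "x \<in> {rL..rU}" "y \<in> {rL..rU}" "x < y"
  then have "deriv eta rU * (y - x) \<le> eta y - eta x"
    using eta_slope_bound[of x y] by simp
  moreover have "eta (2 * x) - eta (2 * y) \<le> \<kappa> * (2 * (y - x))"
    using eta_bond_lipschitz[of "2 * x" "2 * y"] \<open>x \<in> {rL..rU}\<close> \<open>x < y\<close> by simp
  moreover have "0 < (deriv eta rU - 4 * \<kappa>) * (y - x)"
    using \<kappa>_pos \<kappa>_gap \<open>x < y\<close> by simp
  ultimately show "eta_hat x < eta_hat y"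
    unfolding eta_hat_def by (simp add: algebra_simps)
qed

definition continuum_spacing :: "int \<Rightarrow> real" where
  "continuum_spacing j = inv_into {rL..rU} eta_hat (Phi N f j)"

lemma continuum_spacing_solution:
  assumes "- N \<le> j" "j \<le> N"
  shows "continuum_spacing j \<in> {rL<..<rU}" "eta_hat (continuum_spacing j) = Phi N f j"
proof -
  have "eta (2 * rU) \<le> eta (2 * rL)"
    using eta_bond_bounds[of "2 * rL"] rL_less_rU by simp
  then have "eta_hat rL < Phi N f j" "Phi N f j < eta_hat rU"
    using Phi_bounds assms by (auto simp: eta_hat_def)
  moreover have "continuous_on {rL..rU} eta_hat"
    using rL_pos by (intro continuous_on_eta_hat) auto
  ultimately show "continuum_spacing j \<in> {rL<..<rU}" "eta_hat (continuum_spacing j) = Phi N f j"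
    unfolding continuum_spacing_def using IVT_inv_into rL_less_rU by auto
qed

lemma continuum_spacing_unique: "y \<in> {rL..rU} \<Longrightarrow> eta_hat y = Phi N f j \<Longrightarrow> y = continuum_spacing j"
  unfolding continuum_spacing_def
  by (metis eta_hat_strict_mono_on inv_into_f_f strict_mono_on_imp_inj_on)

lemma inv_eta_eta: "y \<in> {rL..rU} \<Longrightarrow> inv_into {rL..rU} eta (eta y) = y"
  using eta_strict_mono_on by (simp add: inv_into_f_f strict_mono_on_imp_inj_on)

definition spacing_box :: "(int \<Rightarrow> real) set" where
  "spacing_box = {r. \<forall>i. - N \<le> i \<and> i \<le> N \<longrightarrow> r i \<in> {rL..rU}}"

lemma spacing_boxD: "r \<in> spacing_box \<Longrightarrow> - N \<le> i \<Longrightarrow> i \<le> N \<Longrightarrow> r i \<in> {rL..rU}"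
  by (simp add: spacing_box_def)

definition atom_target :: "(int \<Rightarrow> real) \<Rightarrow> int \<Rightarrow> real" where
  "atom_target r j = Phi N f j + interface_term r - eta (r (j - 1) + r j) - eta (r j + r (j + 1))"

lemma residual_atomistic: "j < K \<Longrightarrow> residual r j = eta (r j) - atom_target r j"
  by (simp add: residual_def atom_sum_def atom_target_def)

lemma atom_target_bounds:
  assumes "r \<in> spacing_box" "0 \<le> j" "j < K"
  shows "eta rL < atom_target r j" "atom_target r j < eta rU"
proof -
  have bond: "eta (2 * rU) \<le> eta (r a + r b)" "eta (r a + r b) \<le> eta (2 * rL)"
    if "a \<in> {-1..K + 1}" "b \<in> {-1..K + 1}" for a b
    using that spacing_boxD[OF assms(1), of a] spacing_boxD[OF assms(1), of b] K_pos K_less eta_bond_bounds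
    by auto
  have "r K + r K = 2 * r K"
    by simp
  then have "eta (2 * rU) \<le> eta (2 * r K)" "eta (2 * r K) \<le> eta (2 * rL)"
    using bond[of K K] K_pos by simp_all
  moreover have "eta rL + 4 * eta (2 * rL) - 2 * eta (2 * rU) < Phi N f j"
    "Phi N f j < eta rU + 4 * eta (2 * rU) - 2 * eta (2 * rL)"
    using Phi_bounds K_less assms(2,3) by auto
  ultimately show "eta rL < atom_target r j" "atom_target r j < eta rU"
    using bond[of "j - 1" j] bond[of j "j + 1"] bond[of "K - 1" K] bond[of K "K + 1"] assms(2,3)
    unfolding atom_target_def interface_term_def by auto
qed

text \<open>The spacings \<open>r K\<close> and \<open>r (K + 1)\<close> are pinned by the continuum, so the interface term
  contributes only \<open>\<kappa> D\<close> and each of the two bond terms \<open>2 \<kappa> D\<close>.\<close>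

lemma atom_target_lipschitz:
  assumes r: "r \<in> spacing_box" and s: "s \<in> spacing_box" and agree: "r K = s K" "r (K + 1) = s (K + 1)"
    and D: "\<And>i. - N \<le> i \<Longrightarrow> i \<le> N \<Longrightarrow> \<bar>r i - s i\<bar> \<le> D" and j: "0 \<le> j" "j < K"
  shows "\<bar>atom_target r j - atom_target s j\<bar> \<le> 5 * \<kappa> * D"
proof -
  have range: "- N \<le> i \<and> i \<le> N" if "i \<in> {-1..K + 1}" for i
    using that K_pos K_less by auto
  have bond: "\<bar>eta (r a + r b) - eta (s a + s b)\<bar> \<le> \<kappa> * (D + D)"
    if "a \<in> {-1..K + 1}" "b \<in> {-1..K + 1}" for a b
  proof -
    have "r a \<in> {rL..rU}" "r b \<in> {rL..rU}" "s a \<in> {rL..rU}" "s b \<in> {rL..rU}"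
      using spacing_boxD[OF r] spacing_boxD[OF s] range that by auto
    then have "\<bar>eta (r a + r b) - eta (s a + s b)\<bar> \<le> \<kappa> * \<bar>(r a + r b) - (s a + s b)\<bar>"
      by (intro eta_bond_lipschitz) auto
    also have "\<dots> \<le> \<kappa> * (D + D)"
      using D[of a] D[of b] range that \<kappa>_pos by (intro mult_left_mono) auto
    finally show ?thesis .
  qed
  have interface: "\<bar>eta (r (K - 1) + r K) - eta (s (K - 1) + s K)\<bar> \<le> \<kappa> * D"
  proof -
    have "r (K - 1) \<in> {rL..rU}" "r K \<in> {rL..rU}" "s (K - 1) \<in> {rL..rU}"
      using spacing_boxD[OF r] spacing_boxD[OF s] K_pos K_less by auto
    then have "\<bar>eta (r (K - 1) + r K) - eta (s (K - 1) + s K)\<bar> \<le> \<kappa> * \<bar>r (K - 1) - s (K - 1)\<bar>"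
      using eta_bond_lipschitz[of "r (K - 1) + r K" "s (K - 1) + s K"] agree by auto
    also have "\<dots> \<le> \<kappa> * D"
      using D[of "K - 1"] K_pos K_less \<kappa>_pos by (intro mult_left_mono) auto
    finally show ?thesis .
  qed
  show ?thesis
    using interface bond[of "j - 1" j] bond[of j "j + 1"] j
    unfolding atom_target_def interface_term_def agree abs_le_iff by auto
qed

lemma atom_target_cong:
  assumes "\<And>i. - N \<le> i \<Longrightarrow> i \<le> N \<Longrightarrow> r i = s i" "0 \<le> j" "j < K"
  shows "atom_target r j = atom_target s j"
  using assms K_pos K_less by (simp add: atom_target_def interface_term_def)

definition sym_ext :: "(int \<Rightarrow> real) \<Rightarrow> int \<Rightarrow> real" where
  "sym_ext x j = (if \<bar>j\<bar> < K then x \<bar>j\<bar> else continuum_spacing \<bar>j\<bar>)"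

abbreviation atom_box :: "(int \<Rightarrow> real) set" where
  "atom_box \<equiv> {0..<K} \<rightarrow>\<^sub>E {rL..rU}"

definition atom_update :: "(int \<Rightarrow> real) \<Rightarrow> int \<Rightarrow> real" where
  "atom_update x = restrict (\<lambda>j. inv_into {rL..rU} eta (atom_target (sym_ext x) j)) {0..<K}"

lemma symmetric_sym_ext: "symmetric_vec N (sym_ext x)"
  by (simp add: symmetric_vec_def sym_ext_def)

lemma sym_ext_strict_bounds:
  assumes "\<forall>j\<in>{0..<K}. x j \<in> {rL<..<rU}" "- N \<le> i" "i \<le> N"
  shows "rL < sym_ext x i \<and> sym_ext x i < rU"
  using assms continuum_spacing_solution(1)[of "\<bar>i\<bar>"] by (auto simp: sym_ext_def)

lemma sym_ext_in_spacing_box: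
  assumes "x \<in> atom_box"
  shows "sym_ext x \<in> spacing_box"
  unfolding spacing_box_def
proof (intro CollectI allI impI)
  fix i assume "- N \<le> i \<and> i \<le> N"
  then have "- N \<le> \<bar>i\<bar>" "\<bar>i\<bar> \<le> N"
    by auto
  then show "sym_ext x i \<in> {rL..rU}"
    using assms continuum_spacing_solution(1)[of "\<bar>i\<bar>"] by (auto simp: sym_ext_def PiE_iff)
qed

lemma inv_eta_atom_target:
  assumes "x \<in> atom_box" "0 \<le> j" "j < K"
  shows "inv_into {rL..rU} eta (atom_target (sym_ext x) j) \<in> {rL<..<rU}"
    "eta (inv_into {rL..rU} eta (atom_target (sym_ext x) j)) = atom_target (sym_ext x) j"
proof -
  have "continuous_on {rL..rU} eta"
    using rL_pos by (intro continuous_on_eta) auto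
  then show "inv_into {rL..rU} eta (atom_target (sym_ext x) j) \<in> {rL<..<rU}"
    "eta (inv_into {rL..rU} eta (atom_target (sym_ext x) j)) = atom_target (sym_ext x) j"
    using IVT_inv_into atom_target_bounds[OF sym_ext_in_spacing_box[OF assms(1)] assms(2,3)] rL_less_rU
    by auto
qed

lemma atom_update_maps: "atom_update \<in> atom_box \<rightarrow> atom_box"
proof
  fix x assume "x \<in> atom_box"
  show "atom_update x \<in> atom_box"
    unfolding atom_update_def restrict_PiE_iff
  proof
    fix j assume "j \<in> {0..<K}"
    then show "inv_into {rL..rU} eta (atom_target (sym_ext x) j) \<in> {rL..rU}"
      using inv_eta_atom_target(1)[OF \<open>x \<in> atom_box\<close>, of j] by auto
  qed
qed

lemma atom_update_contraction:
  assumes x: "x \<in> atom_box" and y: "y \<in> atom_box" and i: "i \<in> {0..<K}"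
  shows "dist (atom_update x i) (atom_update y i)
           \<le> 5 * \<kappa> / deriv eta rU * (MAX j\<in>{0..<K}. dist (x j) (y j))"
proof -
  define D where "D = (MAX j\<in>{0..<K}. dist (x j) (y j))"
  have xy: "\<bar>x j - y j\<bar> \<le> D" if "j \<in> {0..<K}" for j
    unfolding D_def using that by (simp add: dist_real_def)
  then have "0 \<le> D"
    using K_pos by (meson abs_ge_zero atLeastLessThan_iff order_trans order_refl)
  then have ext: "\<bar>sym_ext x i - sym_ext y i\<bar> \<le> D" for i
    using xy[of "\<bar>i\<bar>"] by (simp add: sym_ext_def)
  let ?u = "inv_into {rL..rU} eta (atom_target (sym_ext x) i)"
  let ?v = "inv_into {rL..rU} eta (atom_target (sym_ext y) i)"
  have i': "0 \<le> i" "i < K"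
    using i by auto
  have "deriv eta rU * \<bar>?u - ?v\<bar> \<le> \<bar>eta ?u - eta ?v\<bar>"
    using inv_eta_atom_target(1)[OF x i'] inv_eta_atom_target(1)[OF y i']
    by (intro eta_expansive) auto
  also have "\<dots> = \<bar>atom_target (sym_ext x) i - atom_target (sym_ext y) i\<bar>"
    using inv_eta_atom_target(2)[OF x i'] inv_eta_atom_target(2)[OF y i'] by simp
  also have "\<dots> \<le> 5 * \<kappa> * D"
    using i' ext by (intro atom_target_lipschitz sym_ext_in_spacing_box x y) (auto simp: sym_ext_def)
  finally have "\<bar>?u - ?v\<bar> \<le> 5 * \<kappa> / deriv eta rU * D"
    using \<kappa>_pos \<kappa>_gap by (simp add: field_simps)
  then show ?thesis
    using i by (simp add: atom_update_def dist_real_def D_def)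
qed

lemma atom_update_unique_fixpoint: "\<exists>!x. x \<in> atom_box \<and> atom_update x = x"
proof (rule contraction_PiE_unique_fixpoint)
  show "5 * \<kappa> / deriv eta rU < 1"
    using \<kappa>_pos \<kappa>_gap by simp
qed (use K_pos rL_less_rU atom_update_maps atom_update_contraction in auto)

lemma equilibrium_of_fixpoint:
  assumes x: "x \<in> atom_box" "atom_update x = x"
  shows "\<forall>j. - N \<le> j \<and> j \<le> N \<longrightarrow> rL < sym_ext x j \<and> sym_ext x j < rU"
    and "\<forall>j. - N \<le> j \<and> j \<le> N + 1 \<longrightarrow> FQCF N K (sym_ext x) j + f j = 0"
proof -
  have atom: "x j = inv_into {rL..rU} eta (atom_target (sym_ext x) j)" if "j \<in> {0..<K}" for j
    using that fun_cong[OF x(2), of j] by (simp add: atom_update_def)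
  then show "\<forall>j. - N \<le> j \<and> j \<le> N \<longrightarrow> rL < sym_ext x j \<and> sym_ext x j < rU"
    using inv_eta_atom_target(1)[OF x(1)] by (intro allI impI sym_ext_strict_bounds) auto
  have "residual (sym_ext x) j = 0" if "0 \<le> j" "j \<le> N" for j
  proof (cases "j < K")
    case True
    then show ?thesis
      using that atom[of j] inv_eta_atom_target(2)[OF x(1), of j]
      by (simp add: residual_atomistic sym_ext_def)
  next
    case False
    then show ?thesis
      using that continuum_spacing_solution(2)[of j] by (simp add: residual_def sym_ext_def)
  qed
  then show "\<forall>j. - N \<le> j \<and> j \<le> N + 1 \<longrightarrow> FQCF N K (sym_ext x) j + f j = 0"
    using equilibrium_iff_residual_zero[OF symmetric_sym_ext] by blast
qed

lemma sym_ext_restrict_equilibrium: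
  assumes sym: "symmetric_vec N r"
    and bounds: "\<forall>j. - N \<le> j \<and> j \<le> N \<longrightarrow> rL < r j \<and> r j < rU"
    and eq: "\<forall>j. - N \<le> j \<and> j \<le> N + 1 \<longrightarrow> FQCF N K r j + f j = 0"
    and j: "- N \<le> j" "j \<le> N"
  shows "sym_ext (restrict r {0..<K}) j = r j"
proof -
  have abs_j: "- N \<le> \<bar>j\<bar>" "\<bar>j\<bar> \<le> N"
    using j by auto
  have "r \<bar>j\<bar> = r j"
    using symmetric_vecD[OF sym, of j] j by (cases "0 \<le> j") auto
  moreover have "r \<bar>j\<bar> = continuum_spacing \<bar>j\<bar>" if "K \<le> \<bar>j\<bar>"
  proof (rule continuum_spacing_unique)
    show "r \<bar>j\<bar> \<in> {rL..rU}"
      using bounds[rule_format, of "\<bar>j\<bar>"] abs_j by auto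
    have "residual r \<bar>j\<bar> = 0"
      using equilibrium_iff_residual_zero[OF sym] eq abs_j by auto
    then show "eta_hat (r \<bar>j\<bar>) = Phi N f \<bar>j\<bar>"
      using that by (simp add: residual_def)
  qed
  ultimately show ?thesis
    by (simp add: sym_ext_def)
qed

lemma fixpoint_of_equilibrium:
  assumes sym: "symmetric_vec N r"
    and bounds: "\<forall>j. - N \<le> j \<and> j \<le> N \<longrightarrow> rL < r j \<and> r j < rU"
    and eq: "\<forall>j. - N \<le> j \<and> j \<le> N + 1 \<longrightarrow> FQCF N K r j + f j = 0"
  shows "restrict r {0..<K} \<in> atom_box" "atom_update (restrict r {0..<K}) = restrict r {0..<K}"
proof -
  have r: "r j \<in> {rL..rU}" if "j \<in> {0..<K}" for j
    using bounds[rule_format, of j] that K_less by auto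
  then show "restrict r {0..<K} \<in> atom_box"
    by (simp add: restrict_PiE_iff)
  have "atom_update (restrict r {0..<K}) j = r j" if j: "j \<in> {0..<K}" for j
  proof -
    have "atom_target (sym_ext (restrict r {0..<K})) j = atom_target r j"
      using sym_ext_restrict_equilibrium[OF sym bounds eq] j by (intro atom_target_cong) auto
    also have "\<dots> = eta (r j)"
    proof -
      have "residual r j = 0"
        using equilibrium_iff_residual_zero[OF sym] eq j K_less by auto
      then show ?thesis
        using j by (simp add: residual_atomistic)
    qed
    finally show ?thesis
      using j r[OF j] by (simp add: atom_update_def inv_eta_eta)
  qed
  then show "atom_update (restrict r {0..<K}) = restrict r {0..<K}"
    by (auto simp: atom_update_def)
qed

theorem unique_symmetric_equilibrium:
  "\<exists>r. symmetric_vec N r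
      \<and> (\<forall>j. - N \<le> j \<and> j \<le> N \<longrightarrow> rL < r j \<and> r j < rU)
      \<and> (\<forall>j. - N \<le> j \<and> j \<le> N + 1 \<longrightarrow> FQCF N K r j + f j = 0)
      \<and> (\<forall>r'. symmetric_vec N r'
              \<and> (\<forall>j. - N \<le> j \<and> j \<le> N \<longrightarrow> rL < r' j \<and> r' j < rU)
              \<and> (\<forall>j. - N \<le> j \<and> j \<le> N + 1 \<longrightarrow> FQCF N K r' j + f j = 0)
              \<longrightarrow> (\<forall>j. - N \<le> j \<and> j \<le> N \<longrightarrow> r' j = r j))"
proof -
  obtain x where x: "x \<in> atom_box" "atom_update x = x"
    and unique: "\<And>y. y \<in> atom_box \<Longrightarrow> atom_update y = y \<Longrightarrow> y = x"
    using atom_update_unique_fixpoint by metis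
  have "\<forall>j. - N \<le> j \<and> j \<le> N \<longrightarrow> r' j = sym_ext x j"
    if "symmetric_vec N r'" "\<forall>j. - N \<le> j \<and> j \<le> N \<longrightarrow> rL < r' j \<and> r' j < rU"
      "\<forall>j. - N \<le> j \<and> j \<le> N + 1 \<longrightarrow> FQCF N K r' j + f j = 0" for r'
    using fixpoint_of_equilibrium[OF that] sym_ext_restrict_equilibrium[OF that] unique by metis
  then show ?thesis
    using symmetric_sym_ext equilibrium_of_fixpoint[OF x] by blast
qed

end

text \<open>\<open>12 \<kappa> = 63 / (16 rL^8)\<close>: this is where the constant in r_lower comes from.\<close>

lemma r_lower_slope_gap:
  assumes "0 < deriv eta rU"
  shows "12 * (84 / (2 * r_lower rU)^8) \<le> deriv eta rU"
proof -
  define b where "b = 63 / (16 * deriv eta rU)"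
  have "0 < b"
    using assms by (simp add: b_def)
  have "b = (b powr (1/8)) ^ 8"
    using \<open>0 < b\<close> by (simp add: powr_powr powr_realpow[symmetric])
  also have "\<dots> \<le> r_lower rU ^ 8"
    by (intro power_mono) (auto simp: r_lower_def b_def)
  finally have "63 / (16 * r_lower rU ^ 8) \<le> deriv eta rU"
    using assms \<open>0 < b\<close> r2t_pos unfolding b_def r_lower_def
    by (simp add: field_simps)
  then show ?thesis
    by (simp add: power_mult_distrib)
qed

theorem corollary4p7:
  fixes N K :: int and f :: "int \<Rightarrow> real" and rU :: real
  assumes "0 < N" and "0 < K" and "K < N - 1"
    and antisym: "\<forall>j. 0 \<le> j \<and> j \<le> N \<longrightarrow> f (j + 1) = - f (-j)"
    and "r2t / 2 < rU" and "rU < a1"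
    and "r_lower rU < rU"
    and "\<forall>j. -N \<le> j \<and> j \<le> N \<longrightarrow>
           eta (r_lower rU) + 4 * eta (2 * r_lower rU) - 2 * eta (2 * rU) < Phi N f j \<and>
           Phi N f j < eta rU + 4 * eta (2 * rU) - 2 * eta (2 * r_lower rU)"
  shows "\<exists>r. symmetric_vec N r
             \<and> (\<forall>j. -N \<le> j \<and> j \<le> N \<longrightarrow> r_lower rU < r j \<and> r j < rU)
             \<and> (\<forall>j. -N \<le> j \<and> j \<le> N + 1 \<longrightarrow> FQCF N K r j + f j = 0)
             \<and> (\<forall>r'. symmetric_vec N r'
                     \<and> (\<forall>j. -N \<le> j \<and> j \<le> N \<longrightarrow> r_lower rU < r' j \<and> r' j < rU)
                     \<and> (\<forall>j. -N \<le> j \<and> j \<le> N + 1 \<longrightarrow> FQCF N K r' j + f j = 0)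
                     \<longrightarrow> (\<forall>j. -N \<le> j \<and> j \<le> N \<longrightarrow> r' j = r j))"
proof -
  have "0 < rU"
    using \<open>r2t / 2 < rU\<close> r2t_pos by linarith
  then have slope: "0 < deriv eta rU"
    using deriv_eta_pos_below_a1 \<open>rU < a1\<close> by blast
  have "r2t \<le> 2 * r_lower rU"
    by (simp add: r_lower_def)
  moreover have "0 < 84 / (2 * r_lower rU)^8"
    using \<open>r2t \<le> 2 * r_lower rU\<close> r2t_pos by simp
  then have "5 * (84 / (2 * r_lower rU)^8) < deriv eta rU"
    using r_lower_slope_gap[OF slope] by linarith
  ultimately interpret qcf_chain N K f "r_lower rU" rU
    using assms r2t_pos a1_less_r2t by unfold_locales auto
  show ?thesis
    by (rule unique_symmetric_equilibrium)
qed

end
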